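(* For each $c>0$ let $\alpha_c,\beta_c,\gamma:\mathbb{R}^n\times\mathbb{S}^m\to\mathbb{R}$ satisfy: (a) $\alpha_c,\beta_c,\gamma$ are continuously differentiable for all $c>0$; (b) $\alpha_c(x,\Lambda)>0$ for all $x$ feasible for (NSDP), all $\Lambda\in\mathbb{S}^m$ and all $c>0$; and, for every KKT pair $(\bar x,\bar\Lambda)$ of (NSDP): (c) $\alpha_c(\bar x,\bar\Lambda)\beta_c(\bar x,\bar\Lambda)=1$ for all $c>0$; (d) $\gamma(\bar x,\bar\Lambda)=0$, $\nabla_x\gamma(\bar x,\bar\Lambda)=0$ and $\nabla_\Lambda\gamma(\bar x,\bar\Lambda)=0$; (e) there exist neighborhoods $V_{\bar x}$ of $\bar x$ and $V_{\bar\Lambda}$ of $\bar\Lambda$ and a continuous function $\Gamma:V_{\bar x}\to V_{\bar\Lambda}$ with $\Gamma(\bar x)=\bar\Lambda$ and $\gamma(x,\Gamma(x))=0$ for all $x\in V_{\bar x}$. Define $$\mathcal{A}_c(x,\Lambda):=f(x)+\alpha_c(x,\Lambda)\,\varphi\big(G(x),\beta_c(x,\Lambda)\Lambda\big)+\gamma(x,\Lambda),\qquad \varphi(Y,Z)=\Big\|P\Big(\tfrac Z2-Y\Big)\Big\|_F^2-\tfrac{\|Z\|_F^2}{4}.$$ If $(x,\Lambda)\in\mathbb{R}^n\times\mathbb{S}^m$ is a KKT pair of (NSDP), then for all $c>0$, $(x,\Lambda)$ is a stationary point of $\mathcal{A}_c$ (i.e. $\nabla_x\mathcal{A}_c(x,\Lambda)=0$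 and $\nabla_\Lambda\mathcal{A}_c(x,\Lambda)=0$) and $\mathcal{A}_c(x,\Lambda)=f(x)$.
   Context: $\mathbb{S}^m$ is the space of real symmetric $m\times m$ matrices with inner product $\langle Y,Z\rangle=\operatorname{tr}(YZ)$ and Frobenius norm $\|\cdot\|_F$; $\mathbb{S}^m_+$ is the positive semidefinite cone and $P$ the orthogonal projection onto $\mathbb{S}^m_+$. $f:\mathbb{R}^n\to\mathbb{R}$ and $G:\mathbb{R}^n\to\mathbb{S}^m$ are twice continuously differentiable; (NSDP) is: minimize $f(x)$ subject to $G(x)\in\mathbb{S}^m_+$. For $x\in\mathbb{R}^n$, $\nabla G(x)v=\sum_i v_i\,\partial G(x)/\partial x_i$ and its adjoint is $\nabla G(x)^*Z=(\langle \partial G(x)/\partial x_i,Z\rangle)_{i=1}^n$. The Lagrangian is $L(x,\Lambda)=f(x)-\langle G(x),\Lambda\rangle$, so $\nabla_xL(x,\Lambda)=\nabla f(x)-\nabla G(x)^*\Lambda$. With the Jordan product $Y\circ Z=(YZ+ZY)/2$, a pair $(x,\Lambda)$ is a KKT pair of (NSDP) if $\nabla_xL(x,\Lambda)=0$, $\Lambda\circ G(x)=0$, $G(x)\in\mathbb{S}^m_+$ and $\Lambda\in\mathbb{S}^m_+$. *)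

theory Defs
  imports "HOL-Analysis.Analysis"
begin

definition sym_mats :: "(real^'m^'m) set" where
  "sym_mats = {A. transpose A = A}"

definition psd_mats :: "(real^'m^'m) set" where
  "psd_mats = {A. transpose A = A \<and> (\<forall>v. 0 \<le> v \<bullet> (A *v v))}"

definition mat_inner :: "real^'m^'m \<Rightarrow> real^'m^'m \<Rightarrow> real" where
  "mat_inner Y Z = trace (Y ** Z)"

text \<open>Frobenius norm: the Euclidean norm on real^'m^'m is sqrt of the sum of squared entries.\<close>
definition frob :: "real^'m^'m \<Rightarrow> real" where
  "frob A = norm A"

definition proj_psd :: "real^'m^'m \<Rightarrow> real^'m^'m" where
  "proj_psd Y = (SOME Z. Z \<in> psd_mats \<and> (\<forall>W\<in>psd_mats. frob (Y - Z) \<le> frob (Y - W)))"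

definition jordan :: "real^'m^'m \<Rightarrow> real^'m^'m \<Rightarrow> real^'m^'m" where
  "jordan Y Z = (1/2) *\<^sub>R (Y ** Z + Z ** Y)"

definition phi :: "real^'m^'m \<Rightarrow> real^'m^'m \<Rightarrow> real" where
  "phi Y Z = (frob (proj_psd ((1/2) *\<^sub>R Z - Y)))^2 - (frob Z)^2 / 4"

definition C2 :: "('a::real_normed_vector \<Rightarrow> 'b::real_normed_vector) \<Rightarrow> bool" where
  "C2 g \<longleftrightarrow> (\<exists>D D2. (\<forall>x. (g has_derivative blinfun_apply (D x)) (at x)) \<and>
                    (\<forall>x. (D has_derivative blinfun_apply (D2 x)) (at x)) \<and>
                    continuous_on UNIV D2)"

definition C1_on :: "'a::real_normed_vector set \<Rightarrow> ('a \<Rightarrow> 'b::real_normed_vector) \<Rightarrow> bool" where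
  "C1_on S g \<longleftrightarrow> (\<exists>D. (\<forall>p\<in>S. (g has_derivative blinfun_apply (D p)) (at p within S)) \<and>
                    continuous_on S D)"

text \<open>KKT pair of (NSDP): grad_x L(x,Lambda) = 0, Lambda o G(x) = 0, G(x), Lambda PSD.
  grad f(x) - grad G(x)^* Lambda = 0 is expressed componentwise along every direction v.\<close>
definition KKT_pair :: "(real^'n \<Rightarrow> real) \<Rightarrow> (real^'n \<Rightarrow> real^'m^'m) \<Rightarrow> real^'n \<Rightarrow> real^'m^'m \<Rightarrow> bool" where
  "KKT_pair f G x \<Lambda> \<longleftrightarrow>
     (\<forall>v. frechet_derivative f (at x) v - mat_inner (frechet_derivative G (at x) v) \<Lambda> = 0) \<and>
     jordan \<Lambda> (G x) = 0 \<and> G x \<in> psd_mats \<and> \<Lambda> \<in> psd_mats"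

text \<open>Both partial gradients (x and Lambda in S^m) of g vanish at p, for g on R^n x S^m.\<close>
definition grads_vanish :: "((real^'n) \<times> (real^'m^'m) \<Rightarrow> real) \<Rightarrow> (real^'n) \<times> (real^'m^'m) \<Rightarrow> bool" where
  "grads_vanish g p \<longleftrightarrow> (\<exists>D. (g has_derivative D) (at p within (UNIV \<times> sym_mats)) \<and>
                          (\<forall>h H. H \<in> sym_mats \<longrightarrow> D (h, H) = 0))"

definition aug_lag ::
  "(real^'n \<Rightarrow> real) \<Rightarrow> (real^'n \<Rightarrow> real^'m^'m) \<Rightarrow> ((real^'n) \<times> (real^'m^'m) \<Rightarrow> real) \<Rightarrow>
   ((real^'n) \<times> (real^'m^'m) \<Rightarrow> real) \<Rightarrow> ((real^'n) \<times> (real^'m^'m) \<Rightarrow> real) \<Rightarrow>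
   (real^'n) \<times> (real^'m^'m) \<Rightarrow> real" where
  "aug_lag f G \<alpha> \<beta> \<gamma> p =
     f (fst p) + \<alpha> p * phi (G (fst p)) (\<beta> p *\<^sub>R snd p) + \<gamma> p"

end

theory Submission
  imports Defs
begin

text \<open>At a KKT pair the multiplier \<Lambda> and the constraint value G(x) are complementary
  elements of the PSD cone, which is self-dual (by the spectral theorem). Hence for
  b = \<beta>(x,\<Lambda>) > 0 the projection of b\<Lambda>/2 - G(x) onto the cone is b\<Lambda>/2, so that
  \<phi>(G(x), b\<Lambda>) = 0. The squared norm of the projection onto a closed convex cone is
  differentiable with gradient twice the projection, so the derivative of \<phi> at (G(x), b\<Lambda>)
  is (dY, dZ) \<mapsto> -\<langle>b\<Lambda>, dY\<rangle>. In the derivative of the augmented Lagrangian the term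
  carrying the derivative of \<alpha> is multiplied by \<phi> = 0, and with \<alpha> b = 1 what remains
  is the x-gradient of the Lagrangian, which vanishes, plus the derivative of \<gamma>, which
  vanishes in all directions tangent to R^n \<times> S^m.\<close>

lemma linear_term_vanishes_if_dominated:
  fixes a k :: real
  assumes "\<And>t. t * a \<le> k * t\<^sup>2"
  shows "a = 0"
proof -
  have "((\<lambda>t. k * t\<^sup>2 - t * a) has_real_derivative - a) (at 0)"
    by (auto intro!: derivative_eq_intros)
  moreover have "\<forall>t. \<bar>0 - t\<bar> < 1 \<longrightarrow> k * 0\<^sup>2 - 0 * a \<le> k * t\<^sup>2 - t * a"
    using assms by simp
  ultimately have "- a = 0"
    by (rule DERIV_local_min[OF _ zero_less_one])
  then show ?thesis by simp
qed

lemma self_adjoint_unit_eigenvector: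
  fixes f :: "'a::euclidean_space \<Rightarrow> 'a"
  assumes lin: "linear f" and adj: "\<And>x y. inner (f x) y = inner x (f y)"
    and S: "subspace S" "f ` S \<subseteq> S" "S \<noteq> {0}"
  obtains u where "u \<in> S" "norm u = 1" "f u = inner u (f u) *\<^sub>R u"
proof -
  define T where "T = S \<inter> sphere 0 1"
  have normalize: "(1 / norm v) *\<^sub>R v \<in> T" if "v \<in> S" "v \<noteq> 0" for v
    using that S unfolding T_def by (auto simp: subspace_scale)
  obtain v where "v \<in> S" "v \<noteq> 0" using S subspace_0 by blast
  then have "T \<noteq> {}" using normalize by blast
  moreover have "compact T"
    unfolding T_def using S by (simp add: closed_subspace closed_Int_compact)
  moreover have "continuous_on T (\<lambda>x. inner x (f x))"
    using linear_continuous_on[OF linear_conv_bounded_linear[THEN iffD1, OF lin]]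
    by (intro continuous_on_inner continuous_on_id)
  ultimately obtain u where "u \<in> T" and umax: "\<And>y. y \<in> T \<Longrightarrow> inner y (f y) \<le> inner u (f u)"
    by (metis continuous_attains_sup)
  define l where "l = inner u (f u)"
  have uS: "u \<in> S" and uu: "inner u u = 1" and un: "norm u = 1"
    using \<open>u \<in> T\<close> unfolding T_def by (auto simp: dot_square_norm)
  have rayleigh: "inner y (f y) \<le> l * inner y y" if "y \<in> S" for y
  proof (cases "y = 0")
    case True then show ?thesis by (simp add: linear_0[OF lin])
  next
    case False
    have "inner ((1 / norm y) *\<^sub>R y) (f ((1 / norm y) *\<^sub>R y)) \<le> l"
      using umax normalize[OF that False] l_def by blast
    then have "inner y (f y) \<le> l * (norm y)\<^sup>2"
      using False by (simp add: linear_scale[OF lin] power2_eq_square field_simps)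
    then show ?thesis by (simp add: dot_square_norm)
  qed
  \<comment> \<open>first variation of the Rayleigh quotient at its maximiser\<close>
  have orth: "2 * inner w (f u) = 0" if "w \<in> S" "inner w u = 0" for w
  proof (rule linear_term_vanishes_if_dominated)
    fix t :: real
    have "u + t *\<^sub>R w \<in> S" using uS that S by (simp add: subspace_add subspace_scale)
    then have "inner (u + t *\<^sub>R w) (f (u + t *\<^sub>R w)) \<le> l * inner (u + t *\<^sub>R w) (u + t *\<^sub>R w)"
      by (rule rayleigh)
    moreover have "inner u (f w) = inner w (f u)" using adj by (metis inner_commute)
    ultimately show "t * (2 * inner w (f u)) \<le> (l * inner w w - inner w (f w)) * t\<^sup>2"
      using uu that
      by (simp add: linear_add[OF lin] linear_scale[OF lin] inner_add_left inner_add_right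
          l_def power2_eq_square algebra_simps inner_commute)
  qed
  have "f u = l *\<^sub>R u"
  proof -
    define w where "w = f u - l *\<^sub>R u"
    have "w \<in> S" unfolding w_def using uS S by (auto simp: subspace_diff subspace_scale)
    moreover have wu: "inner w u = 0"
      unfolding w_def using uu by (simp add: inner_diff_left l_def inner_commute[of "f u" u])
    ultimately have "inner w w = 0"
      using orth unfolding w_def by (simp add: inner_diff_right)
    then show ?thesis unfolding w_def by simp
  qed
  then show thesis using that uS un l_def by blast
qed

lemma self_adjoint_orthonormal_eigenbasis:
  fixes f :: "'a::euclidean_space \<Rightarrow> 'a"
  assumes lin: "linear f" and adj: "\<And>x y. inner (f x) y = inner x (f y)"
  shows "subspace S \<Longrightarrow> f ` S \<subseteq> S \<Longrightarrow>
    \<exists>U. finite U \<and> U \<subseteq> S \<and> pairwise orthogonal U \<and>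
      (\<forall>u\<in>U. norm u = 1 \<and> f u = inner u (f u) *\<^sub>R u) \<and>
      (\<forall>x\<in>S. x = (\<Sum>u\<in>U. inner x u *\<^sub>R u))"
proof (induction "dim S" arbitrary: S rule: less_induct)
  case less
  show ?case
  proof (cases "S = {0}")
    case True
    then show ?thesis by (intro exI[of _ "{}"]) auto
  next
    case False
    with less.prems obtain u where uS: "u \<in> S" and un: "norm u = 1" and eig: "f u = inner u (f u) *\<^sub>R u"
      using self_adjoint_unit_eigenvector[OF lin adj] by metis
    have uu: "inner u u = 1" using un by (simp add: dot_square_norm)
    define S' where "S' = S \<inter> {x. inner x u = 0}"
    have sub': "subspace S'" unfolding S'_def
      by (intro subspace_inter less.prems(1)) (auto simp: subspace_def inner_add_left)
    have inv': "f ` S' \<subseteq> S'"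
    proof
      fix y assume "y \<in> f ` S'"
      then obtain x where x: "x \<in> S'" "y = f x" by blast
      have "inner (f x) u = inner x (f u)" by (rule adj)
      also have "\<dots> = inner u (f u) * inner x u" by (subst eig) simp
      also have "\<dots> = 0" using x unfolding S'_def by simp
      finally show "y \<in> S'" using x less.prems unfolding S'_def by auto
    qed
    have "u \<notin> S'" using uu unfolding S'_def by auto
    then have "S' \<subset> S" using uS unfolding S'_def by blast
    then have "dim S' < dim S"
      using sub' less.prems(1) by (metis dim_psubset span_eq_iff)
    from less.hyps[OF this sub' inv'] obtain U where U: "finite U" "U \<subseteq> S'" "pairwise orthogonal U"
      "\<forall>v\<in>U. norm v = 1 \<and> f v = inner v (f v) *\<^sub>R v" "\<forall>x\<in>S'. x = (\<Sum>v\<in>U. inner x v *\<^sub>R v)"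
      by blast
    have uU: "u \<notin> U" using U(2) \<open>u \<notin> S'\<close> by blast
    show ?thesis
    proof (intro exI[of _ "insert u U"] conjI ballI)
      show "finite (insert u U)" "insert u U \<subseteq> S" using U uS unfolding S'_def by auto
      show "pairwise orthogonal (insert u U)" using U(2,3) unfolding S'_def
        by (auto simp: pairwise_insert orthogonal_def inner_commute)
      show "norm v = 1" "f v = inner v (f v) *\<^sub>R v" if "v \<in> insert u U" for v
        using that U un eig by auto
      fix x assume xS: "x \<in> S"
      define x' where "x' = x - inner x u *\<^sub>R u"
      have "x' \<in> S'" unfolding S'_def x'_def using xS uS less.prems uu
        by (auto simp: subspace_diff subspace_scale inner_diff_left)
      then have "x' = (\<Sum>v\<in>U. inner x' v *\<^sub>R v)" using U by blast
      also have "\<dots> = (\<Sum>v\<in>U. inner x v *\<^sub>R v)"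
      proof (rule sum.cong)
        fix v assume "v \<in> U"
        then have "inner u v = 0" using U(2) unfolding S'_def by (auto simp: inner_commute)
        then show "inner x' v *\<^sub>R v = inner x v *\<^sub>R v"
          unfolding x'_def by (simp add: inner_diff_left)
      qed simp
      finally show "x = (\<Sum>v\<in>insert u U. inner x v *\<^sub>R v)"
        using U(1) uU unfolding x'_def by (simp add: algebra_simps)
    qed
  qed
qed

lemma closest_point_cone_orthogonal:
  fixes K :: "'a::euclidean_space set"
  assumes "cone K" "convex K" "closed K" "K \<noteq> {}"
  shows "inner (W - closest_point K W) (closest_point K W) = 0"
proof -
  have P: "closest_point K W \<in> K" by (rule closest_point_in_set[OF assms(3,4)])
  have "0 \<in> K" using assms(1,4) cone_contains_0 by blast
  then have "inner (W - closest_point K W) (0 - closest_point K W) \<le> 0"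
    by (rule closest_point_dot[OF assms(2,3)])
  moreover have "inner (W - closest_point K W) (2 *\<^sub>R closest_point K W - closest_point K W) \<le> 0"
    using mem_cone[OF assms(1) P, of 2] by (intro closest_point_dot[OF assms(2,3)]) simp
  ultimately show ?thesis by (simp add: algebra_simps)
qed

lemma closest_point_cone_dual:
  fixes K :: "'a::euclidean_space set"
  assumes "cone K" "convex K" "closed K" "K \<noteq> {}" "C \<in> K"
  shows "inner (closest_point K W - W) C \<ge> 0"
  using closest_point_dot[OF assms(2,3,5), of W] closest_point_cone_orthogonal[OF assms(1-4), of W]
  by (simp add: inner_commute algebra_simps)

text \<open>The remainder is controlled by the variational inequalities of the projection at both
  points and by its nonexpansiveness.\<close>

lemma closest_point_cone_sq_norm_remainder:
  fixes K :: "'a::euclidean_space set"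
  assumes K: "cone K" "convex K" "closed K" "K \<noteq> {}"
  shows "\<bar>(norm (closest_point K W'))\<^sup>2 - (norm (closest_point K W))\<^sup>2
            - 2 * inner (closest_point K W) (W' - W)\<bar> \<le> 3 * (norm (W' - W))\<^sup>2"
proof -
  define A Q d where "A = closest_point K W" and "Q = closest_point K W'" and "d = W' - W"
  have AK: "A \<in> K" and QK: "Q \<in> K" unfolding A_def Q_def using closest_point_in_set K by auto
  have orthA: "inner (W - A) A = 0" and orthQ: "inner (W' - Q) Q = 0"
    unfolding A_def Q_def using closest_point_cone_orthogonal[OF K] by auto
  have dualA: "inner (A - W) Q \<ge> 0" and dualQ: "inner (Q - W') A \<ge> 0"
    using closest_point_cone_dual[OF K] AK QK unfolding A_def Q_def by auto
  have lip: "norm (A - Q) \<le> norm d"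
    using closest_point_lipschitz[OF K(2-4), of W W'] unfolding A_def Q_def d_def
    by (simp add: dist_norm norm_minus_commute)
  define X where "X = inner A (Q - W')"
  have expand: "(norm Q)\<^sup>2 - (norm A)\<^sup>2 - 2 * inner A d = (norm (Q - A))\<^sup>2 + 2 * X"
    using orthA unfolding X_def d_def power2_norm_eq_inner
    by (simp add: inner_commute algebra_simps)
  have "X \<ge> 0" using dualQ unfolding X_def by (simp add: inner_commute)
  have "X = - (norm (A - Q))\<^sup>2 - inner (A - W) Q - inner (A - Q) d"
    using orthA orthQ unfolding X_def d_def power2_norm_eq_inner
    by (simp add: inner_commute algebra_simps)
  also have "\<dots> \<le> norm (A - Q) * norm d"
    using dualA abs_le_D2[OF Cauchy_Schwarz_ineq2[of "A - Q" d]] zero_le_power2[of "norm (A - Q)"]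
    by linarith
  also have "\<dots> \<le> (norm d)\<^sup>2"
    using lip by (simp add: power2_eq_square mult_right_mono)
  finally have "X \<le> (norm d)\<^sup>2" .
  moreover have "(norm (Q - A))\<^sup>2 \<le> (norm d)\<^sup>2"
    using lip by (simp add: norm_minus_commute power_mono)
  moreover have "0 \<le> (norm (Q - A))\<^sup>2 + 2 * X" using \<open>X \<ge> 0\<close> by simp
  ultimately have "\<bar>(norm Q)\<^sup>2 - (norm A)\<^sup>2 - 2 * inner A d\<bar> \<le> 3 * (norm d)\<^sup>2"
    unfolding expand by linarith
  then show ?thesis unfolding A_def Q_def d_def .
qed

lemma has_derivative_sq_norm_closest_point_cone:
  fixes K :: "'a::euclidean_space set"
  assumes K: "cone K" "convex K" "closed K" "K \<noteq> {}"
  shows "((\<lambda>W. (norm (closest_point K W))\<^sup>2) has_derivative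
           (\<lambda>d. 2 * inner (closest_point K W) d)) (at W)"
  unfolding has_derivative_at_alt
proof (intro conjI allI impI)
  show "bounded_linear (\<lambda>d. 2 * inner (closest_point K W) d)"
    by (intro bounded_linear_const_mult bounded_linear_inner_right)
  fix e :: real assume "e > 0"
  show "\<exists>\<delta>>0. \<forall>W'. norm (W' - W) < \<delta> \<longrightarrow>
      norm ((norm (closest_point K W'))\<^sup>2 - (norm (closest_point K W))\<^sup>2
        - 2 * inner (closest_point K W) (W' - W)) \<le> e * norm (W' - W)"
  proof (intro exI[of _ "e / 3"] conjI allI impI)
    show "e / 3 > 0" using \<open>e > 0\<close> by simp
    fix W' assume "norm (W' - W) < e / 3"
    then have "3 * norm (W' - W) * norm (W' - W) \<le> e * norm (W' - W)"
      by (intro mult_right_mono) simp_all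
    then have "3 * (norm (W' - W))\<^sup>2 \<le> e * norm (W' - W)"
      by (simp add: power2_eq_square)
    then show "norm ((norm (closest_point K W'))\<^sup>2 - (norm (closest_point K W))\<^sup>2
        - 2 * inner (closest_point K W) (W' - W)) \<le> e * norm (W' - W)"
      using closest_point_cone_sq_norm_remainder[OF K, of W' W] by simp
  qed
qed

lemma closest_point_complementary:
  fixes K :: "'a::euclidean_space set"
  assumes "convex K" "closed K" "A \<in> K" "\<And>C. C \<in> K \<Longrightarrow> inner B C \<ge> 0" "inner A B = 0"
  shows "closest_point K (A - B) = A"
proof (rule closest_point_unique[OF assms(1-3), symmetric], intro ballI)
  fix C assume "C \<in> K"
  have "(norm (A - B - C))\<^sup>2 = (norm (A - C))\<^sup>2 + 2 * inner B C + (norm B)\<^sup>2"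
    using assms(5) unfolding power2_norm_eq_inner
    by (simp add: inner_commute algebra_simps)
  then have "(norm (A - B - A))\<^sup>2 \<le> (norm (A - B - C))\<^sup>2"
    using assms(4)[OF \<open>C \<in> K\<close>] by simp
  then show "dist (A - B) A \<le> dist (A - B) C"
    by (simp add: dist_norm power2_le_iff_abs_le)
qed

lemma symmetric_matrix_self_adjoint:
  fixes B :: "real^'m^'m"
  assumes "transpose B = B"
  shows "inner (B *v x) y = inner x (B *v y)"
  by (metis assms dot_lmul_matrix inner_commute transpose_transpose vector_transpose_matrix)

lemma psd_inner_nonneg:
  fixes B C :: "real^'m^'m"
  assumes C: "C \<in> psd_mats" and B: "B \<in> psd_mats"
  shows "inner C B \<ge> 0"
proof -
  define ev where "ev u = inner u (B *v u)" for u :: "real^'m"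
  have "transpose B = B" using B by (simp add: psd_mats_def)
  then obtain U where U: "finite U" "\<And>u. u \<in> U \<Longrightarrow> B *v u = ev u *\<^sub>R u"
      "\<And>x. x = (\<Sum>u\<in>U. inner x u *\<^sub>R u)"
    using self_adjoint_orthonormal_eigenbasis[OF matrix_vector_mul_linear
        symmetric_matrix_self_adjoint, of B UNIV]
    unfolding ev_def by auto
  have entries: "B$i$j = (\<Sum>u\<in>U. ev u * u$i * u$j)" for i j
  proof -
    have lin: "linear ((*v) B)" by (rule matrix_vector_mul_linear)
    have "B *v axis j 1 = B *v (\<Sum>u\<in>U. inner (axis j 1) u *\<^sub>R u)"
      using arg_cong[of _ _ "(*v) B", OF U(3)[of "axis j 1"]] .
    also have "\<dots> = (\<Sum>u\<in>U. inner (axis j 1) u *\<^sub>R (B *v u))"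
      by (simp add: linear_sum[OF lin] linear_scale[OF lin] o_def)
    also have "\<dots> = (\<Sum>u\<in>U. (u$j * ev u) *\<^sub>R u)"
      by (rule sum.cong) (auto simp: U(2) inner_axis')
    finally have "(B *v axis j 1) $ i = (\<Sum>u\<in>U. ev u * u$i * u$j)"
      by (simp add: sum_component algebra_simps)
    moreover have "(B *v axis j 1) $ i = B$i$j"
      by (simp add: matrix_vector_mult_def axis_def if_distrib cong: if_cong)
    ultimately show ?thesis by simp
  qed
  have "inner C B = (\<Sum>i\<in>UNIV. \<Sum>j\<in>UNIV. \<Sum>u\<in>U. ev u * (u$i * C$i$j * u$j))"
    by (simp add: inner_vec_def entries sum_distrib_left algebra_simps)
  also have "\<dots> = (\<Sum>u\<in>U. ev u * (\<Sum>i\<in>UNIV. \<Sum>j\<in>UNIV. u$i * C$i$j * u$j))"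
    by (simp add: sum.swap[of _ UNIV U] sum_distrib_left)
  also have "\<dots> = (\<Sum>u\<in>U. ev u * inner u (C *v u))"
    by (simp add: inner_vec_def matrix_vector_mult_def sum_distrib_left algebra_simps)
  also have "\<dots> \<ge> 0"
    using B C unfolding ev_def psd_mats_def by (intro sum_nonneg mult_nonneg_nonneg) auto
  finally show ?thesis .
qed

lemma psd_mats_closed: "closed (psd_mats :: (real^'m^'m) set)"
proof -
  have lin_transpose: "linear (transpose :: real^'m^'m \<Rightarrow> real^'m^'m)"
    by (rule linearI) (simp_all add: transpose_def vec_eq_iff)
  have lin_form: "linear (\<lambda>A::real^'m^'m. inner v (A *v v))" for v
    by (rule linearI) (simp_all add: matrix_vector_mult_add_rdistrib inner_add_right
        scaleR_matrix_vector_assoc[symmetric])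
  have closed_sym: "closed {A::real^'m^'m. transpose A = A}"
    using closed_Collect_eq[OF linear_continuous_on[OF linear_conv_bounded_linear[THEN iffD1, OF lin_transpose]]
        continuous_on_id] by simp
  have closed_form: "closed {A::real^'m^'m. 0 \<le> inner v (A *v v)}" for v
    by (rule closed_Collect_le[OF continuous_on_const
          linear_continuous_on[OF linear_conv_bounded_linear[THEN iffD1, OF lin_form]]])
  have eq: "psd_mats = {A::real^'m^'m. transpose A = A} \<inter> (\<Inter>v. {A. 0 \<le> inner v (A *v v)})"
    unfolding psd_mats_def by blast
  show ?thesis
    unfolding eq using closed_sym closed_form by (intro closed_Int closed_INT) auto
qed

lemma psd_mats_cone: "cone (psd_mats :: (real^'m^'m) set)"
  unfolding cone_def psd_mats_def
  by (auto simp: transpose_scalar scaleR_matrix_vector_assoc[symmetric])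

lemma psd_mats_convex: "convex (psd_mats :: (real^'m^'m) set)"
  unfolding convex_def psd_mats_def
  by (auto simp: transpose_scalar scaleR_matrix_vector_assoc[symmetric] transpose_def vec_eq_iff
      matrix_vector_mult_add_rdistrib inner_add_right)

lemma zero_in_psd_mats: "0 \<in> psd_mats"
  unfolding psd_mats_def by (simp add: transpose_def vec_eq_iff)

lemma proj_psd_eq_closest_point: "proj_psd Y = closest_point psd_mats Y"
  unfolding proj_psd_def closest_point_def frob_def dist_norm ..

lemma trace_mult_symmetric_eq_inner:
  fixes Y Z :: "real^'m^'m"
  assumes "transpose Z = Z"
  shows "trace (Y ** Z) = inner Y Z"
proof -
  have "Z$k$i = Z$i$k" for i k
    using arg_cong[of _ _ "\<lambda>M. M$i$k", OF assms] by (simp add: transpose_def)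
  then show ?thesis
    by (simp add: trace_def matrix_matrix_mult_def inner_vec_def)
qed

lemma phi_complementary:
  fixes Y Z :: "real^'m^'m"
  assumes Y: "Y \<in> psd_mats" and Z: "Z \<in> psd_mats" and YZ: "inner Y Z = 0"
  shows "phi Y Z = 0"
    and "((\<lambda>p. phi (fst p) (snd p)) has_derivative (\<lambda>h. - inner Z (fst h))) (at (Y, Z))"
proof -
  have cone: "cone psd_mats" "convex psd_mats" "closed psd_mats" "psd_mats \<noteq> {}"
    using psd_mats_cone psd_mats_convex psd_mats_closed zero_in_psd_mats by blast+
  have P: "closest_point psd_mats ((1/2) *\<^sub>R Z - Y) = (1/2) *\<^sub>R Z"
    using Z YZ psd_inner_nonneg[OF _ Y] mem_cone[OF cone(1) Z, of "1/2"]
    by (intro closest_point_complementary[OF cone(2,3)]) (auto simp: inner_commute)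
  have phi_eq: "(\<lambda>p. phi (fst p) (snd p)) = (\<lambda>p::(real^'m^'m) \<times> (real^'m^'m).
      (norm (closest_point psd_mats ((1/2) *\<^sub>R snd p - fst p)))\<^sup>2 - (1/4) * inner (snd p) (snd p))"
    by (simp add: fun_eq_iff phi_def frob_def proj_psd_eq_closest_point power2_norm_eq_inner)
  show "phi Y Z = 0"
    using fun_cong[OF phi_eq, of "(Y, Z)"] by (simp add: P power_divide dot_square_norm)
  have outer: "((\<lambda>W. (norm (closest_point psd_mats W))\<^sup>2) has_derivative (\<lambda>d. inner Z d))
          (at ((1/2) *\<^sub>R snd (Y, Z) - fst (Y, Z)))"
    using has_derivative_sq_norm_closest_point_cone[OF cone, of "(1/2) *\<^sub>R Z - Y"] by (simp add: P)
  have inner: "((\<lambda>p. (1/2) *\<^sub>R snd p - fst p) has_derivative (\<lambda>h. (1/2) *\<^sub>R snd h - fst h)) (at (Y, Z))"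
    by (intro derivative_intros)
  have "((\<lambda>p. (norm (closest_point psd_mats ((1/2) *\<^sub>R snd p - fst p)))\<^sup>2) has_derivative
      (\<lambda>h. inner Z ((1/2) *\<^sub>R snd h - fst h))) (at (Y, Z))"
    using has_derivative_compose[OF inner outer] .
  moreover have "((\<lambda>p. (1/4) * inner (snd p) (snd p)) has_derivative
      (\<lambda>h. (1/4) * (inner (snd (Y, Z)) (snd h) + inner (snd h) (snd (Y, Z))))) (at (Y, Z))"
    by (intro derivative_intros)
  ultimately have "((\<lambda>p. phi (fst p) (snd p)) has_derivative
      (\<lambda>h. inner Z ((1/2) *\<^sub>R snd h - fst h) - (1/4) * (inner Z (snd h) + inner (snd h) Z))) (at (Y, Z))"
    unfolding phi_eq by simp
  then show "((\<lambda>p. phi (fst p) (snd p)) has_derivative (\<lambda>h. - inner Z (fst h))) (at (Y, Z))"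
    by (rule has_derivative_eq_rhs) (simp add: fun_eq_iff inner_diff_right inner_commute)
qed

lemma KKT_pair_complementary:
  assumes "KKT_pair f G x \<Lambda>"
  shows "inner (G x) \<Lambda> = 0"
proof -
  have "transpose \<Lambda> = \<Lambda>" "transpose (G x) = G x" and "\<Lambda> ** G x + G x ** \<Lambda> = 0"
    using assms unfolding KKT_pair_def psd_mats_def jordan_def by auto
  moreover from this(3) have "trace (\<Lambda> ** G x) + trace (G x ** \<Lambda>) = 0"
    by (metis trace_add trace_0 mat_0)
  ultimately have "inner \<Lambda> (G x) + inner (G x) \<Lambda> = 0"
    by (simp only: trace_mult_symmetric_eq_inner)
  then show ?thesis by (simp add: inner_commute)
qed

lemma KKT_pair_gradient:
  assumes "KKT_pair f G x \<Lambda>" "(f has_derivative Df) (at x)" "(G has_derivative DG) (at x)"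
  shows "Df v = inner \<Lambda> (DG v)"
proof -
  have "transpose \<Lambda> = \<Lambda>" and
    "frechet_derivative f (at x) v - mat_inner (frechet_derivative G (at x) v) \<Lambda> = 0"
    using assms(1) unfolding KKT_pair_def psd_mats_def by auto
  moreover have "frechet_derivative f (at x) = Df" "frechet_derivative G (at x) = DG"
    using frechet_derivative_at assms(2,3) by metis+
  ultimately have "Df v - inner (DG v) \<Lambda> = 0"
    unfolding mat_inner_def by (simp only: trace_mult_symmetric_eq_inner)
  then show ?thesis by (simp add: inner_commute)
qed

lemma has_derivative_compose_fst:
  assumes "(g has_derivative g') (at (fst p))"
  shows "((\<lambda>q. g (fst q)) has_derivative (\<lambda>h. g' (fst h))) (at p within S)"
  using has_derivative_compose[OF has_derivative_fst[OF has_derivative_ident] assms] .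

lemma aug_lag_at_KKT_pair:
  assumes kkt: "KKT_pair f G x \<Lambda>"
    and f: "(f has_derivative Df) (at x)" and G: "(G has_derivative DG) (at x)"
    and \<alpha>: "(\<alpha> has_derivative D\<alpha>) (at (x, \<Lambda>) within S)"
    and \<beta>: "(\<beta> has_derivative D\<beta>) (at (x, \<Lambda>) within S)"
    and \<gamma>: "(\<gamma> has_derivative D\<gamma>) (at (x, \<Lambda>) within S)"
    and pos: "\<alpha> (x, \<Lambda>) > 0" and inv: "\<alpha> (x, \<Lambda>) * \<beta> (x, \<Lambda>) = 1"
  shows "(aug_lag f G \<alpha> \<beta> \<gamma> has_derivative D\<gamma>) (at (x, \<Lambda>) within S)"
    and "aug_lag f G \<alpha> \<beta> \<gamma> (x, \<Lambda>) = f x + \<gamma> (x, \<Lambda>)"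
proof -
  define a b where "a = \<alpha> (x, \<Lambda>)" and "b = \<beta> (x, \<Lambda>)"
  have "b > 0" using pos inv unfolding a_def b_def by (metis zero_less_mult_pos zero_less_one)
  have "G x \<in> psd_mats" "\<Lambda> \<in> psd_mats" using kkt unfolding KKT_pair_def by auto
  have Z: "b *\<^sub>R \<Lambda> \<in> psd_mats"
    by (rule mem_cone[OF psd_mats_cone \<open>\<Lambda> \<in> psd_mats\<close>]) (use \<open>b > 0\<close> in simp)
  have YZ: "inner (G x) (b *\<^sub>R \<Lambda>) = 0" using KKT_pair_complementary[OF kkt] by simp
  note phi = phi_complementary[OF \<open>G x \<in> psd_mats\<close> Z YZ]
  have "((\<lambda>p. \<beta> p *\<^sub>R snd p) has_derivative (\<lambda>h. b *\<^sub>R snd h + D\<beta> h *\<^sub>R \<Lambda>))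
      (at (x, \<Lambda>) within S)"
    using has_derivative_scaleR[OF \<beta> has_derivative_snd[OF has_derivative_ident]] unfolding b_def by simp
  then have inner: "((\<lambda>p. (G (fst p), \<beta> p *\<^sub>R snd p)) has_derivative
      (\<lambda>h. (DG (fst h), b *\<^sub>R snd h + D\<beta> h *\<^sub>R \<Lambda>))) (at (x, \<Lambda>) within S)"
    using G by (intro has_derivative_Pair has_derivative_compose_fst) simp_all
  have outer: "((\<lambda>p. phi (fst p) (snd p)) has_derivative (\<lambda>h. - inner (b *\<^sub>R \<Lambda>) (fst h)))
      (at (G (fst (x, \<Lambda>)), \<beta> (x, \<Lambda>) *\<^sub>R snd (x, \<Lambda>)))"
    using phi(2) unfolding b_def by simp
  from has_derivative_compose[OF inner outer] have "((\<lambda>p. phi (G (fst p)) (\<beta> p *\<^sub>R snd p))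
      has_derivative (\<lambda>h. - inner (b *\<^sub>R \<Lambda>) (DG (fst h)))) (at (x, \<Lambda>) within S)"
    by simp
  from has_derivative_mult[OF \<alpha> this] have "((\<lambda>p. \<alpha> p * phi (G (fst p)) (\<beta> p *\<^sub>R snd p))
      has_derivative (\<lambda>h. a * - inner (b *\<^sub>R \<Lambda>) (DG (fst h)))) (at (x, \<Lambda>) within S)"
    using phi(1) unfolding a_def b_def by simp
  moreover have "(f has_derivative Df) (at (fst (x, \<Lambda>)))" using f by simp
  ultimately have "(aug_lag f G \<alpha> \<beta> \<gamma> has_derivative
      (\<lambda>h. Df (fst h) + a * - inner (b *\<^sub>R \<Lambda>) (DG (fst h)) + D\<gamma> h)) (at (x, \<Lambda>) within S)"
    unfolding aug_lag_def[abs_def] by (intro has_derivative_add has_derivative_compose_fst \<gamma>)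
  moreover have "(\<lambda>h. Df (fst h) + a * - inner (b *\<^sub>R \<Lambda>) (DG (fst h)) + D\<gamma> h) = D\<gamma>"
    using KKT_pair_gradient[OF kkt f G] inv unfolding a_def b_def by (simp add: fun_eq_iff)
  ultimately show "(aug_lag f G \<alpha> \<beta> \<gamma> has_derivative D\<gamma>) (at (x, \<Lambda>) within S)"
    by (rule has_derivative_eq_rhs)
  show "aug_lag f G \<alpha> \<beta> \<gamma> (x, \<Lambda>) = f x + \<gamma> (x, \<Lambda>)"
    using phi(1) unfolding aug_lag_def b_def by simp
qed

theorem proposition3p5:
  fixes f :: "real^'n \<Rightarrow> real"
    and G :: "real^'n \<Rightarrow> real^'m^'m"
    and \<alpha> \<beta> :: "real \<Rightarrow> (real^'n) \<times> (real^'m^'m) \<Rightarrow> real"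
    and \<gamma> :: "(real^'n) \<times> (real^'m^'m) \<Rightarrow> real"
    and x :: "real^'n" and \<Lambda> :: "real^'m^'m"
  assumes f_C2: "C2 f"
    and G_C2: "C2 G"
    and G_sym: "\<And>y. G y \<in> sym_mats"
    and a: "\<And>c. c > 0 \<Longrightarrow> C1_on (UNIV \<times> sym_mats) (\<alpha> c) \<and> C1_on (UNIV \<times> sym_mats) (\<beta> c)"
    and a_gamma: "C1_on (UNIV \<times> sym_mats) \<gamma>"
    and b: "\<And>c y M. c > 0 \<Longrightarrow> G y \<in> psd_mats \<Longrightarrow> M \<in> sym_mats \<Longrightarrow> \<alpha> c (y, M) > 0"
    and c: "\<And>c xb Lb. KKT_pair f G xb Lb \<Longrightarrow> c > 0 \<Longrightarrow> \<alpha> c (xb, Lb) * \<beta> c (xb, Lb) = 1"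
    and d: "\<And>xb Lb. KKT_pair f G xb Lb \<Longrightarrow> \<gamma> (xb, Lb) = 0 \<and> grads_vanish \<gamma> (xb, Lb)"
    and e: "\<And>xb Lb. KKT_pair f G xb Lb \<Longrightarrow>
              \<exists>Vx VL \<Gamma>. open Vx \<and> xb \<in> Vx \<and> openin (top_of_set sym_mats) VL \<and> Lb \<in> VL \<and>
                continuous_on Vx \<Gamma> \<and> \<Gamma> ` Vx \<subseteq> VL \<and> \<Gamma> xb = Lb \<and>
                (\<forall>y\<in>Vx. \<gamma> (y, \<Gamma> y) = 0)"
    and kkt: "KKT_pair f G x \<Lambda>"
  shows "\<forall>c>0. grads_vanish (aug_lag f G (\<alpha> c) (\<beta> c) \<gamma>) (x, \<Lambda>) \<and>
               aug_lag f G (\<alpha> c) (\<beta> c) \<gamma> (x, \<Lambda>) = f x"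
proof (intro allI impI)
  fix c :: real assume "c > 0"
  have "G x \<in> psd_mats" and "\<Lambda> \<in> sym_mats"
    using kkt unfolding KKT_pair_def psd_mats_def sym_mats_def by auto
  then have x\<Lambda>: "(x, \<Lambda>) \<in> UNIV \<times> sym_mats" by simp
  obtain Df DG where "(f has_derivative Df) (at x)" "(G has_derivative DG) (at x)"
    using f_C2 G_C2 unfolding C2_def by metis
  moreover obtain D\<alpha> D\<beta> where
    "(\<alpha> c has_derivative D\<alpha>) (at (x, \<Lambda>) within UNIV \<times> sym_mats)"
    "(\<beta> c has_derivative D\<beta>) (at (x, \<Lambda>) within UNIV \<times> sym_mats)"
    using a[OF \<open>c > 0\<close>] x\<Lambda> unfolding C1_on_def by metis
  moreover obtain D\<gamma> where "(\<gamma> has_derivative D\<gamma>) (at (x, \<Lambda>) within UNIV \<times> sym_mats)"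
      and D\<gamma>_vanishes: "\<And>h H. H \<in> sym_mats \<Longrightarrow> D\<gamma> (h, H) = 0"
    using d[OF kkt] unfolding grads_vanish_def by metis
  moreover have "\<alpha> c (x, \<Lambda>) > 0" using b[OF \<open>c > 0\<close>] \<open>G x \<in> psd_mats\<close> \<open>\<Lambda> \<in> sym_mats\<close> .
  ultimately have "(aug_lag f G (\<alpha> c) (\<beta> c) \<gamma> has_derivative D\<gamma>) (at (x, \<Lambda>) within UNIV \<times> sym_mats)"
    and "aug_lag f G (\<alpha> c) (\<beta> c) \<gamma> (x, \<Lambda>) = f x + \<gamma> (x, \<Lambda>)"
    using aug_lag_at_KKT_pair[OF kkt] c[OF kkt \<open>c > 0\<close>] by blast+
  then show "grads_vanish (aug_lag f G (\<alpha> c) (\<beta> c) \<gamma>) (x, \<Lambda>) \<and>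
      aug_lag f G (\<alpha> c) (\<beta> c) \<gamma> (x, \<Lambda>) = f x"
    using D\<gamma>_vanishes d[OF kkt] unfolding grads_vanish_def by auto
qed

end
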